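(* Assume $f$ is differentiable on $\mathbb{R}^m$ with $L$-Lipschitz continuous gradient ($L>0$), and let $\bar q$ be the (unique) minimizer of $f^*$ on $\mathbb{R}^m$. Then for all $k\in\mathbb{N}$, $$\|q_k\|_2\le \sqrt{2L\,(f^*(0)-f^*(\bar q))}+\|\bar q\|_2=:R.$$
   Context: Let $\Omega\subseteq\mathbb{R}^d$ be a nonempty open set, $a_1,\dots,a_m\in\mathcal{C}_0(\Omega)$, and $A^*q=\sum_{i=1}^m q_ia_i$ for $q\in\mathbb{R}^m$. Let $f:\mathbb{R}^m\to\mathbb{R}$ be convex and bounded from below, with convex conjugate $f^*(q)=\sup_y\langle q,y\rangle-f(y)$ (under the assumption, $f^*$ is $\tfrac1L$-strongly convex). For $\Omega'\subseteq\Omega$, $(\mathcal{D}(\Omega'))$ is the problem $\sup\{-f^*(q):q\in\mathbb{R}^m,\ |A^*q(x)|\le1\ \forall x\in\Omega'\}$. The sets $\Omega_k\subseteq\Omega$ are those produced by the exchange algorithm (given $\Omega_0$; $q_k$ solves $(\mathcal{D}(\Omega_k))$; $X_k$ is the set of local maximizers $x\in\Omega$ of $|A^*q_k|$ with $|A^*q_k(x)|>1$; $\Omega_{k+1}=\Omega_k\cup X_k$); in particular $q_k$ is the solution of $(\mathcal{D}(\Omega_k))$. *)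

theory Defs
  imports "HOL-Analysis.Analysis"
begin

(* C_0(Omega): continuous on Omega and vanishing at the boundary of Omega / at infinity *)
definition C0_on :: "('d::metric_space) set \<Rightarrow> ('d \<Rightarrow> real) \<Rightarrow> bool" where
  "C0_on \<Omega> g \<longleftrightarrow> continuous_on \<Omega> g \<and>
     (\<forall>\<epsilon>>0. \<exists>K. compact K \<and> K \<subseteq> \<Omega> \<and> (\<forall>x\<in>\<Omega> - K. \<bar>g x\<bar> < \<epsilon>))"

definition Astar :: "('m::finite \<Rightarrow> 'd \<Rightarrow> real) \<Rightarrow> real^'m \<Rightarrow> 'd \<Rightarrow> real" where
  "Astar a q x = (\<Sum>i\<in>UNIV. q $ i * a i x)"

definition fconj :: "(real^'m \<Rightarrow> real) \<Rightarrow> real^'m \<Rightarrow> ereal" where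
  "fconj f q = (SUP y. ereal (q \<bullet> y - f y))"

definition dual_feasible :: "('m::finite \<Rightarrow> 'd \<Rightarrow> real) \<Rightarrow> 'd set \<Rightarrow> real^'m \<Rightarrow> bool" where
  "dual_feasible a \<Omega>' q \<longleftrightarrow> (\<forall>x\<in>\<Omega>'. \<bar>Astar a q x\<bar> \<le> 1)"

definition solves_D :: "(real^'m \<Rightarrow> real) \<Rightarrow> ('m::finite \<Rightarrow> 'd \<Rightarrow> real) \<Rightarrow> 'd set \<Rightarrow> real^'m \<Rightarrow> bool" where
  "solves_D f a \<Omega>' q \<longleftrightarrow> dual_feasible a \<Omega>' q \<and>
     (\<forall>p. dual_feasible a \<Omega>' p \<longrightarrow> - fconj f p \<le> - fconj f q)"

definition exch_X :: "('m::finite \<Rightarrow> 'd::metric_space \<Rightarrow> real) \<Rightarrow> 'd set \<Rightarrow> real^'m \<Rightarrow> 'd set" where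
  "exch_X a \<Omega> q = {x\<in>\<Omega>. (\<exists>e>0. \<forall>y\<in>\<Omega>. dist y x < e \<longrightarrow> \<bar>Astar a q y\<bar> \<le> \<bar>Astar a q x\<bar>)
                           \<and> \<bar>Astar a q x\<bar> > 1}"

end

theory Submission
  imports Defs
begin

text \<open>
  A gradient \<open>g\<close> that is \<open>L\<close>-Lipschitz gives the quadratic upper bound
  \<open>f z \<le> f x + g x \<bullet> (z - x) + L/2 \<parallel>z - x\<parallel>\<^sup>2\<close>; evaluating \<open>p \<bullet> y - f y\<close> at
  \<open>y = L\<^sup>-\<^sup>1 (p - g 0)\<close> turns it into the quadratic growth
  \<open>f\<^sup>*(p) \<ge> -f 0 + \<parallel>p - g 0\<parallel>\<^sup>2/(2L)\<close>, while convexity gives \<open>f\<^sup>*(g 0) = -f 0\<close>.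
  Hence the minimizer of \<open>f\<^sup>*\<close> is \<open>g 0\<close>, and every \<open>q\<close> with \<open>f\<^sup>*(q) \<le> f\<^sup>*(0)\<close>
  lies in the ball of radius \<open>\<surd>(2L(f\<^sup>*(0) - min f\<^sup>*))\<close> around it.
  Each \<open>q\<^sub>k\<close> is such a point because \<open>0\<close> is feasible for every \<open>\<D>(\<Omega>\<^sub>k)\<close>.
\<close>

lemma has_real_derivative_along_line:
  fixes f :: "'a::real_inner \<Rightarrow> real"
  assumes "\<And>y. (f has_derivative (\<lambda>h. g y \<bullet> h)) (at y)"
  shows "((\<lambda>t. f (x + t *\<^sub>R v)) has_real_derivative (g (x + t *\<^sub>R v) \<bullet> v)) (at t)"
proof -
  have "((\<lambda>t. x + t *\<^sub>R v) has_derivative (\<lambda>h. h *\<^sub>R v)) (at t)"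
    by (auto intro!: derivative_eq_intros)
  from has_derivative_compose[OF this assms]
  have "((\<lambda>t. f (x + t *\<^sub>R v)) has_derivative (\<lambda>h. g (x + t *\<^sub>R v) \<bullet> (h *\<^sub>R v))) (at t)" .
  moreover have "(\<lambda>h. g (x + t *\<^sub>R v) \<bullet> (h *\<^sub>R v)) = (\<lambda>h. h * (g (x + t *\<^sub>R v) \<bullet> v))"
    by (simp add: inner_scaleR_right)
  ultimately show ?thesis
    by (simp add: has_field_derivative_def mult.commute[of _ "g (x + t *\<^sub>R v) \<bullet> v"])
qed

lemma convex_on_line_restriction:
  assumes "convex_on UNIV f"
  shows "convex_on UNIV (\<lambda>t::real. f (x + t *\<^sub>R v))"
proof (rule convex_onI)
  fix u s t :: real
  assume "0 < u" "u < 1"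
  have "x + ((1 - u) *\<^sub>R s + u *\<^sub>R t) *\<^sub>R v = (1 - u) *\<^sub>R (x + s *\<^sub>R v) + u *\<^sub>R (x + t *\<^sub>R v)"
    by (simp add: algebra_simps)
  then show "f (x + ((1 - u) *\<^sub>R s + u *\<^sub>R t) *\<^sub>R v) \<le> (1 - u) * f (x + s *\<^sub>R v) + u * f (x + t *\<^sub>R v)"
    using convex_onD[OF assms, of u] \<open>0 < u\<close> \<open>u < 1\<close> by simp
qed simp

lemma convex_differentiable_above_tangent:
  fixes f :: "'a::real_inner \<Rightarrow> real"
  assumes "convex_on UNIV f"
    and "\<And>y. (f has_derivative (\<lambda>h. g y \<bullet> h)) (at y)"
  shows "f x + g x \<bullet> (z - x) \<le> f z"
proof -
  have "((\<lambda>t. f (x + t *\<^sub>R (z - x))) has_real_derivative (g x \<bullet> (z - x))) (at 0)"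
    using has_real_derivative_along_line[OF assms(2), of x "z - x" 0] by simp
  then have "(g x \<bullet> (z - x)) * (1 - 0) \<le> f (x + 1 *\<^sub>R (z - x)) - f (x + 0 *\<^sub>R (z - x))"
    by (intro convex_on_imp_above_tangent[OF convex_on_line_restriction[OF assms(1)]]) auto
  then show ?thesis by simp
qed

lemma lipschitz_gradient_quadratic_upper_bound:
  fixes f :: "'a::real_inner \<Rightarrow> real"
  assumes "\<And>y. (f has_derivative (\<lambda>h. g y \<bullet> h)) (at y)"
    and "\<And>y z. norm (g y - g z) \<le> L * norm (y - z)"
  shows "f z \<le> f x + g x \<bullet> (z - x) + L / 2 * norm (z - x) ^ 2"
proof -
  define v where "v = z - x"
  define \<psi> where "\<psi> t = f (x + t *\<^sub>R v) - t * (g x \<bullet> v) - L / 2 * t\<^sup>2 * norm v ^ 2" for t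
  define \<psi>' where "\<psi>' t = g (x + t *\<^sub>R v) \<bullet> v - g x \<bullet> v - L * t * norm v ^ 2" for t
  have "DERIV \<psi> t :> \<psi>' t" for t
    unfolding \<psi>_def \<psi>'_def
    by (auto intro!: derivative_eq_intros has_real_derivative_along_line[OF assms(1)])
  then obtain t where t: "0 < t" "t < 1" "\<psi> 1 - \<psi> 0 = \<psi>' t"
    using MVT2[of 0 1 \<psi> \<psi>'] by auto
  have "g (x + t *\<^sub>R v) \<bullet> v - g x \<bullet> v \<le> norm (g (x + t *\<^sub>R v) - g x) * norm v"
    by (metis inner_diff_left norm_cauchy_schwarz)
  also have "\<dots> \<le> L * norm (t *\<^sub>R v) * norm v"
    using assms(2)[of "x + t *\<^sub>R v" x] by (simp add: mult_right_mono)
  also have "\<dots> = L * t * norm v ^ 2"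
    using t by (simp add: power2_eq_square)
  finally have "\<psi> 1 \<le> \<psi> 0"
    using t unfolding \<psi>'_def by simp
  then show ?thesis
    unfolding \<psi>_def v_def by simp
qed

lemma fconj_lower_bound: "ereal (p \<bullet> y - f y) \<le> fconj f p"
  unfolding fconj_def by (rule SUP_upper) auto

lemma fconj_zero_finite:
  assumes "bdd_below (range f)"
  shows "\<bar>fconj f 0\<bar> \<noteq> \<infinity>"
proof -
  obtain B where "\<And>y. B \<le> f y"
    using assms by (auto simp: bdd_below_def)
  then have "fconj f 0 \<le> ereal (- B)"
    unfolding fconj_def by (intro SUP_least) auto
  moreover have "ereal (- f 0) \<le> fconj f 0"
    using fconj_lower_bound[of 0 0 f] by simp
  ultimately show ?thesis
    by (cases "fconj f 0") auto
qed

lemma fconj_gradient: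
  assumes "convex_on UNIV f"
    and "\<And>y. (f has_derivative (\<lambda>h. g y \<bullet> h)) (at y)"
  shows "fconj f (g x) = ereal (g x \<bullet> x - f x)"
proof (rule antisym)
  show "fconj f (g x) \<le> ereal (g x \<bullet> x - f x)"
    unfolding fconj_def
    using convex_differentiable_above_tangent[OF assms]
    by (intro SUP_least) (auto simp: algebra_simps inner_diff_right)
qed (rule fconj_lower_bound)

text \<open>This is the \<open>L\<^sup>-\<^sup>1\<close>-strong convexity of \<open>f\<^sup>*\<close> at \<open>g x\<close>.\<close>

lemma fconj_quadratic_growth:
  assumes "\<And>y. (f has_derivative (\<lambda>h. g y \<bullet> h)) (at y)"
    and "\<And>y z. norm (g y - g z) \<le> L * norm (y - z)"
    and "L > 0"
  shows "ereal (p \<bullet> x - f x + norm (p - g x) ^ 2 / (2 * L)) \<le> fconj f p"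
proof -
  define y where "y = x + (1 / L) *\<^sub>R (p - g x)"
  have "f y \<le> f x + g x \<bullet> (y - x) + L / 2 * norm (y - x) ^ 2"
    by (rule lipschitz_gradient_quadratic_upper_bound[OF assms(1,2)])
  moreover have "L / 2 * norm (y - x) ^ 2 = norm (p - g x) ^ 2 / (2 * L)"
    using \<open>L > 0\<close> by (simp add: y_def power2_eq_square)
  moreover have "(p - g x) \<bullet> (y - x) = norm (p - g x) ^ 2 / L"
    by (simp add: y_def power2_norm_eq_inner)
  ultimately have "p \<bullet> x - f x + norm (p - g x) ^ 2 / (2 * L) \<le> p \<bullet> y - f y"
    by (simp add: algebra_simps inner_diff_left inner_diff_right)
  then show ?thesis
    using fconj_lower_bound[of p y f] order_trans ereal_less_eq(3) by blast
qed

lemma fconj_minimizer_eq_gradient_zero: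
  assumes "convex_on UNIV f"
    and "\<And>y. (f has_derivative (\<lambda>h. g y \<bullet> h)) (at y)"
    and "\<And>y z. norm (g y - g z) \<le> L * norm (y - z)"
    and "L > 0"
    and "\<And>p. fconj f qmin \<le> fconj f p"
  shows "qmin = g 0"
proof -
  have "ereal (qmin \<bullet> 0 - f 0 + norm (qmin - g 0) ^ 2 / (2 * L)) \<le> fconj f qmin"
    by (rule fconj_quadratic_growth[OF assms(2-4)])
  also have "\<dots> \<le> fconj f (g 0)"
    by (rule assms(5))
  also have "\<dots> = ereal (g 0 \<bullet> 0 - f 0)"
    by (rule fconj_gradient[OF assms(1,2)])
  finally have "norm (qmin - g 0) ^ 2 \<le> 0"
    using \<open>L > 0\<close> by (simp add: divide_le_0_iff)
  then show ?thesis by simp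
qed

lemma fconj_sublevel_norm_bound:
  assumes "convex_on UNIV f" and "bdd_below (range f)"
    and "\<And>y. (f has_derivative (\<lambda>h. g y \<bullet> h)) (at y)"
    and "\<And>y z. norm (g y - g z) \<le> L * norm (y - z)"
    and "L > 0"
    and "fconj f p \<le> fconj f 0"
  shows "norm (p - g 0) \<le> sqrt (2 * L * (real_of_ereal (fconj f 0) - real_of_ereal (fconj f (g 0))))"
proof -
  obtain c where c: "fconj f 0 = ereal c"
    using fconj_zero_finite[OF assms(2)] by (cases "fconj f 0") auto
  have "ereal (p \<bullet> 0 - f 0 + norm (p - g 0) ^ 2 / (2 * L)) \<le> fconj f p"
    by (rule fconj_quadratic_growth[OF assms(3-5)])
  also have "\<dots> \<le> ereal c"
    using assms(6) c by simp
  finally have "norm (p - g 0) ^ 2 \<le> 2 * L * (c - (- f 0))"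
    using \<open>L > 0\<close> by (simp add: field_simps)
  then show ?thesis
    using c fconj_gradient[OF assms(1,3), of 0] by (simp add: real_le_rsqrt)
qed

lemma solves_D_le_fconj_zero:
  assumes "solves_D f a \<Omega>' q"
  shows "fconj f q \<le> fconj f 0"
proof -
  have "dual_feasible a \<Omega>' 0"
    by (simp add: dual_feasible_def Astar_def)
  with assms show ?thesis
    by (simp add: solves_D_def)
qed

theorem mainTheorem2:
  fixes \<Omega> :: "(real^'d) set"
    and a :: "'m::finite \<Rightarrow> real^'d \<Rightarrow> real"
    and f :: "real^'m \<Rightarrow> real"
    and L :: real
    and g :: "real^'m \<Rightarrow> real^'m"
    and qbar :: "real^'m"
    and \<Omega>s :: "nat \<Rightarrow> (real^'d) set"
    and q :: "nat \<Rightarrow> real^'m"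
  assumes "open \<Omega>" and "\<Omega> \<noteq> {}"
    and "\<And>i. C0_on \<Omega> (a i)"
    and "convex_on UNIV f" and "bdd_below (range f)"
    and "L > 0"
    and "\<And>y. (f has_derivative (\<lambda>h. g y \<bullet> h)) (at y)"
    and "\<And>y z. norm (g y - g z) \<le> L * norm (y - z)"
    and "\<And>p. fconj f qbar \<le> fconj f p"
    and "\<Omega>s 0 \<subseteq> \<Omega>"
    and "\<And>k. solves_D f a (\<Omega>s k) (q k)"
    and "\<And>k. \<Omega>s (Suc k) = \<Omega>s k \<union> exch_X a \<Omega> (q k)"
  shows "\<forall>k. norm (q k) \<le>
           sqrt (2 * L * (real_of_ereal (fconj f 0) - real_of_ereal (fconj f qbar))) + norm qbar"
proof
  fix k
  have qbar: "qbar = g 0"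
    using fconj_minimizer_eq_gradient_zero assms(4,6-9) by blast
  have "norm (q k - qbar) \<le> sqrt (2 * L * (real_of_ereal (fconj f 0) - real_of_ereal (fconj f qbar)))"
    unfolding qbar
    by (rule fconj_sublevel_norm_bound[OF assms(4,5,7,8,6) solves_D_le_fconj_zero[OF assms(11)]])
  then show "norm (q k) \<le>
      sqrt (2 * L * (real_of_ereal (fconj f 0) - real_of_ereal (fconj f qbar))) + norm qbar"
    using norm_triangle_sub[of "q k" qbar] by linarith
qed

end
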